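(* Let $H$ be a real Hilbert space, $t\in(0,1]$ and $b\in(0,1]$. Then for every $m\ge 1$ and every $\alpha$ with $0<\alpha \le \frac{(2-b)t}{(2-b)t+2}$, $$ \gamma_m^{t,b}(\alpha,H) \le \bigl(1+mb(2-b) t^2\bigr)^{-\alpha/2}. $$ Equivalently: for every dictionary $\mathcal D$ of $H$, every $f\in H$, $f\neq 0$, with $\|f\|_{A_1(\mathcal D)}<\infty$, and every realization of the WGA$(t,b)$, $$\|f-G^{t,b}_m(f,\mathcal D)\|\le \|f\|^{1-\alpha}\|f\|_{A_1(\mathcal D)}^{\alpha}\bigl(1+mb(2-b)t^2\bigr)^{-\alpha/2}.$$
   Context: $H$ is a real Hilbert space with inner product $\langle\cdot,\cdot\rangle$ and norm $\|\cdot\|$. A (symmetric) dictionary is a set $\mathcal D\subset H$ with $\|g\|=1$ for all $g\in\mathcal D$, $\overline{\operatorname{span}}\,\mathcal D=H$, and $g\in\mathcal D\Rightarrow -g\in\mathcal D$. $A_1(\mathcal D)$ is the closure of the convex hull of $\mathcal D$, and $\|f\|_{A_1(\mathcal D)}:=\inf\{M: f/M\in A_1(\mathcal D)\}$. Weak Greedy Algorithm with parameter $b$, WGA$(t,b)$: set $f_0:=f$; for $m\ge1$ choose any $\varphi_m\in\mathcal D$ with $\langle f_{m-1},\varphi_m\rangle\ge t\sup_{g\in\mathcal D}\langle f_{m-1},g\rangle$, set $f_m:=f_{m-1}-b\langle f_{m-1},\varphi_m\rangle\varphi_m$ and $G^{t,b}_m(f,\mathcal D):=b\sum_{j=1}^m\langle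 f_{j-1},\varphi_j\rangle\varphi_j$. For $\alpha\in(0,1]$, $$\gamma_m^{t,b}(\alpha,H):=\sup_{\mathcal D}\sup_f\sup_{G^{t,b}_m(f,\mathcal D)}\frac{\|f-G^{t,b}_m(f,\mathcal D)\|}{\|f\|^{1-\alpha}\|f\|_{A_1(\mathcal D)}^{\alpha}},$$ the suprema being over all dictionaries $\mathcal D$, all $f\ne0$ with $\|f\|_{A_1(\mathcal D)}<\infty$, and all possible realizations of the algorithm. *)

theory Defs
  imports "HOL-Analysis.Analysis"
begin

definition dictionary :: "'a::{real_inner,complete_space} set \<Rightarrow> bool" where
  "dictionary D \<longleftrightarrow> (\<forall>g\<in>D. norm g = 1) \<and> closure (span D) = UNIV \<and> (\<forall>g\<in>D. - g \<in> D)"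

definition A1 :: "'a::real_normed_vector set \<Rightarrow> 'a set" where
  "A1 D = closure (convex hull D)"

definition A1_norm :: "'a::real_normed_vector set \<Rightarrow> 'a \<Rightarrow> real" where
  "A1_norm D f = Inf {M. M > 0 \<and> scaleR (1 / M) f \<in> A1 D}"

definition A1_finite :: "'a::real_normed_vector set \<Rightarrow> 'a \<Rightarrow> bool" where
  "A1_finite D f \<longleftrightarrow> (\<exists>M. M > 0 \<and> scaleR (1 / M) f \<in> A1 D)"

fun wga_res :: "real \<Rightarrow> 'a::real_inner \<Rightarrow> (nat \<Rightarrow> 'a) \<Rightarrow> nat \<Rightarrow> 'a" where
  "wga_res b f \<phi> 0 = f"
| "wga_res b f \<phi> (Suc m) =
     wga_res b f \<phi> m - (b * inner (wga_res b f \<phi> m) (\<phi> (Suc m))) *\<^sub>R \<phi> (Suc m)"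

definition wga_approx :: "real \<Rightarrow> 'a::real_inner \<Rightarrow> (nat \<Rightarrow> 'a) \<Rightarrow> nat \<Rightarrow> 'a" where
  "wga_approx b f \<phi> m =
     b *\<^sub>R (\<Sum>j=1..m. inner (wga_res b f \<phi> (j - 1)) (\<phi> j) *\<^sub>R \<phi> j)"

definition wga_realization ::
  "real \<Rightarrow> real \<Rightarrow> 'a::real_inner set \<Rightarrow> 'a \<Rightarrow> (nat \<Rightarrow> 'a) \<Rightarrow> nat \<Rightarrow> bool" where
  "wga_realization t b D f \<phi> m \<longleftrightarrow>
     (\<forall>j\<in>{1..m}. \<phi> j \<in> D \<and>
        inner (wga_res b f \<phi> (j - 1)) (\<phi> j)
          \<ge> t * (SUP g\<in>D. inner (wga_res b f \<phi> (j - 1)) g))"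

end

theory Submission
  imports Defs
begin

text \<open>
  Write \<open>a k = \<parallel>f\<^sub>k\<parallel>\<^sup>2\<close> for the residuals, \<open>c k = \<langle>f\<^sub>k\<^sub>-\<^sub>1, \<phi>\<^sub>k\<rangle>\<close> for the greedy coefficients and
  \<open>B k = \<parallel>f\<parallel>\<^sub>A\<^sub>1 + b (c 1 + \<dots> + c k)\<close>. Since the \<open>\<phi>\<^sub>k\<close> are unit vectors,
  \<open>a (k+1) = a k - b (2 - b) c (k+1)\<^sup>2\<close>; expanding \<open>\<langle>f\<^sub>k, f\<^sub>k\<rangle>\<close> with
  \<open>f\<^sub>k = f - b \<Sum> c i \<phi>\<^sub>i\<close>, the symmetry of the dictionary and the weak greedy choice give
  \<open>t a k \<le> c (k+1) B k\<close>. These make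
  \<open>a k (B k)\<^sup>p\<close> nonincreasing for \<open>p = (2 - b) t\<close>, which turns the energy decrease into
  \<open>a (k+1) \<le> a k (1 - \<kappa> (a k)\<^sup>r)\<close> with \<open>r = 1 + 2/p\<close>, hence
  \<open>a m\<^sup>-\<^sup>r \<ge> a 0\<^sup>-\<^sup>r (1 + r m b (2 - b) t\<^sup>2 a 0 / \<parallel>f\<parallel>\<^sub>A\<^sub>1\<^sup>2)\<close>. Because \<open>\<alpha> \<le> 1/r\<close> and
  \<open>a 0 \<le> \<parallel>f\<parallel>\<^sub>A\<^sub>1\<^sup>2\<close>, this bound dominates the claimed one.
\<close>

lemma powr_le_exp_mult_diff_one:
  fixes x p :: real
  assumes "0 < x" "0 \<le> p"
  shows "x powr p \<le> exp (p * (x - 1))"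
proof -
  have "p * ln x \<le> p * (x - 1)"
    using assms ln_le_minus_one[OF assms(1)] by (intro mult_left_mono)
  then show ?thesis
    using assms(1) by (simp add: powr_def)
qed

lemma one_plus_le_powr_neg:
  fixes x r :: real
  assumes "0 < x" "0 \<le> r"
  shows "1 + r * (1 - x) \<le> x powr (- r)"
proof -
  have "r * (1 - x) \<le> - r * ln x"
    using assms ln_le_minus_one[OF assms(1)] mult_left_mono[of "ln x" "x - 1" r]
    by (simp add: algebra_simps)
  also have "\<dots> \<le> exp (- r * ln x) - 1"
    using exp_ge_add_one_self[of "- r * ln x"] by simp
  finally show ?thesis
    using assms(1) by (simp add: powr_def)
qed

lemma energy_potential_step:
  fixes a a' b c t p \<beta> B :: real
  assumes "0 \<le> a'" "a' = a - \<beta> * c\<^sup>2" "0 \<le> \<beta>" "0 \<le> c" "0 \<le> b" "0 \<le> p"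
    and "0 < B" "t * a \<le> c * B" "p * b = \<beta> * t"
  shows "a' * (B + b * c) powr p \<le> a * B powr p"
proof (cases "a' = 0")
  case True
  then show ?thesis
    using assms by simp
next
  case False
  have "a' \<le> a"
    using assms(2,3) by simp
  with False assms(1) have a_pos: "0 < a"
    by linarith
  have a': "a' \<le> a * exp (- (\<beta> * c\<^sup>2 / a))"
  proof -
    have "a' = a * (1 + - (\<beta> * c\<^sup>2 / a))"
      using a_pos unfolding assms(2) by (simp add: field_simps)
    then show ?thesis
      using a_pos exp_ge_add_one_self[of "- (\<beta> * c\<^sup>2 / a)"] by simp
  qed
  have B: "(B + b * c) powr p \<le> B powr p * exp (p * (b * c / B))"
  proof -
    have "(B + b * c) powr p = B powr p * (1 + b * c / B) powr p"
      using assms by (simp add: powr_mult[symmetric] distrib_left)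
    also have "\<dots> \<le> B powr p * exp (p * (b * c / B))"
      using powr_le_exp_mult_diff_one[of "1 + b * c / B" p] assms
      by (intro mult_left_mono) (auto simp: add_pos_nonneg)
    finally show ?thesis .
  qed
  have "p * (b * c / B) = \<beta> * c * t / B"
    using assms(9) by (simp add: field_simps)
  also have "\<dots> \<le> \<beta> * c\<^sup>2 / a"
    using mult_left_mono[OF assms(8), of "\<beta> * c"] assms a_pos
    by (simp add: field_simps power2_eq_square)
  finally have "exp (p * (b * c / B)) * exp (- (\<beta> * c\<^sup>2 / a)) \<le> 1"
    by (simp flip: exp_add)
  have "a' * (B + b * c) powr p \<le> a * exp (- (\<beta> * c\<^sup>2 / a)) * (B powr p * exp (p * (b * c / B)))"
    using a' B assms by (intro mult_mono) auto
  also have "\<dots> = a * B powr p * (exp (p * (b * c / B)) * exp (- (\<beta> * c\<^sup>2 / a)))"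
    by simp
  also have "\<dots> \<le> a * B powr p"
    using \<open>exp _ * exp _ \<le> 1\<close> a_pos by (intro mult_left_le) auto
  finally show ?thesis .
qed

lemma powr_neg_increment_of_decay:
  fixes x x' \<kappa> r :: real
  assumes "0 < x" "0 < x'" "x' \<le> x * (1 - \<kappa> * x powr r)" "0 \<le> r" "0 \<le> \<kappa>"
  shows "x powr (- r) + r * \<kappa> \<le> x' powr (- r)"
proof -
  define y where "y = \<kappa> * x powr r"
  have "0 < x * (1 - y)"
    using assms by (simp add: y_def)
  then have y_less: "y < 1"
    using assms(1) by (simp add: zero_less_mult_iff)
  have "x powr (- r) + r * \<kappa> = x powr (- r) * (1 + r * y)"
    using assms(1) by (simp add: y_def powr_minus field_simps)
  also have "\<dots> \<le> x powr (- r) * (1 - y) powr (- r)"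
    using one_plus_le_powr_neg[of "1 - y" r] y_less assms(4) by (intro mult_left_mono) auto
  also have "\<dots> = (x * (1 - y)) powr (- r)"
    using assms(1) y_less by (simp add: powr_mult)
  also have "\<dots> \<le> x' powr (- r)"
    using assms y_less by (intro powr_mono2') (auto simp: y_def)
  finally show ?thesis .
qed

lemma powr_neg_inverse_le_powr_neg:
  fixes u K r \<alpha> :: real
  assumes "0 < u" "u \<le> 1" "0 \<le> K" "1 \<le> r" "0 \<le> \<alpha>" "\<alpha> \<le> 1 / r"
  shows "(1 + r * K * u) powr (- 1 / r) \<le> (u * (1 + K)) powr (- \<alpha>)"
proof -
  define w where "w = 1 + r * K * u"
  have w_ge_1: "1 \<le> w"
    using assms by (simp add: w_def)
  have "u * (1 + K) \<le> w"
    using assms mult_right_mono[of 1 r "K * u"] mult_left_mono[of u 1 K]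
    by (simp add: w_def algebra_simps)
  have "w powr (- 1 / r) \<le> w powr (- \<alpha>)"
    using w_ge_1 assms by (intro powr_mono) auto
  also have "\<dots> \<le> (u * (1 + K)) powr (- \<alpha>)"
    using \<open>u * (1 + K) \<le> w\<close> assms by (intro powr_mono2') auto
  finally show ?thesis
    by (simp add: w_def)
qed

lemma sqrt_power2_powr:
  fixes x a :: real
  assumes "0 \<le> x"
  shows "sqrt ((x\<^sup>2) powr a) = x powr a"
proof (cases "x = 0")
  case True
  then show ?thesis
    by simp
next
  case False
  with assms have "(x\<^sup>2) powr a = (x powr a)\<^sup>2"
    using powr_power[of x a 2] powr_powr[of x 2 a] by simp
  then show ?thesis
    by simp
qed

locale greedy_energy =
  fixes a c B :: "nat \<Rightarrow> real" and t b A :: real and m :: nat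
  assumes t_pos: "0 < t" and b_pos: "0 < b" and b_less_2: "b < 2"
    and A_pos: "0 < A" and a_0_pos: "0 < a 0" and a_0_le: "a 0 \<le> A\<^sup>2"
    and a_nonneg: "\<And>k. k \<le> m \<Longrightarrow> 0 \<le> a k"
    and a_Suc: "\<And>k. k < m \<Longrightarrow> a (Suc k) = a k - b * (2 - b) * (c (Suc k))\<^sup>2"
    and c_nonneg: "\<And>k. k < m \<Longrightarrow> 0 \<le> c (Suc k)"
    and t_a_le: "\<And>k. k < m \<Longrightarrow> t * a k \<le> c (Suc k) * B k"
    and B_0: "B 0 = A"
    and B_Suc: "\<And>k. k < m \<Longrightarrow> B (Suc k) = B k + b * c (Suc k)"
begin

definition p :: real where "p = (2 - b) * t"

definition r :: real where "r = 1 + 2 / p"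

definition \<kappa> :: real where "\<kappa> = b * (2 - b) * t\<^sup>2 / (a 0 powr (2 / p) * A\<^sup>2)"

lemma p_pos: "0 < p"
  using t_pos b_less_2 by (simp add: p_def)

lemma r_ge_1: "1 \<le> r"
  using p_pos by (simp add: r_def)

lemma \<kappa>_nonneg: "0 \<le> \<kappa>"
  using b_pos b_less_2 by (simp add: \<kappa>_def)

lemma a_Suc_le: "k < m \<Longrightarrow> a (Suc k) \<le> a k"
  using a_Suc[of k] b_pos b_less_2 by simp

lemma potential_le: "k \<le> m \<Longrightarrow> A \<le> B k \<and> a k * B k powr p \<le> a 0 * A powr p"
proof (induction k)
  case 0
  then show ?case
    by (simp add: B_0)
next
  case (Suc k)
  then have "k < m" "A \<le> B k" "a k * B k powr p \<le> a 0 * A powr p"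
    by auto
  moreover have "a (Suc k) * (B k + b * c (Suc k)) powr p \<le> a k * B k powr p"
    using \<open>k < m\<close> \<open>A \<le> B k\<close> A_pos b_pos b_less_2 p_pos a_nonneg[OF Suc.prems]
    by (intro energy_potential_step[where t = t])
      (auto simp: a_Suc c_nonneg t_a_le p_def)
  ultimately show ?case
    using b_pos c_nonneg[of k] by (simp add: B_Suc add_increasing2)
qed

(* The potential bound eliminates B k: (B k)^2 \<le> a 0 powr (2 / p) * A^2 / a k powr (2 / p). *)
lemma a_Suc_le_decay:
  assumes "k < m" "0 < a k"
  shows "a (Suc k) \<le> a k * (1 - \<kappa> * a k powr r)"
proof -
  define s where "s = 2 / p"
  have s_pos: "0 < s" and ps: "p * s = 2"
    using p_pos by (auto simp: s_def)
  have A_le: "A \<le> B k" and pot: "a k * B k powr p \<le> a 0 * A powr p"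
    using potential_le[of k] assms(1) by auto
  have B_pos: "0 < B k"
    using A_pos A_le by linarith
  have "(B k)\<^sup>2 = (B k powr p) powr s"
    using B_pos by (simp add: powr_powr ps)
  also have "\<dots> \<le> (a 0 * A powr p / a k) powr s"
    using pot assms(2) B_pos s_pos by (intro powr_mono2) (auto simp: field_simps)
  also have "\<dots> = a 0 powr s * A\<^sup>2 / a k powr s"
    using A_pos a_0_pos assms(2) by (simp add: powr_mult powr_divide powr_powr ps)
  finally have B_sq: "(B k)\<^sup>2 \<le> a 0 powr s * A\<^sup>2 / a k powr s" .
  have "\<kappa> * a k powr r * a k = b * (2 - b) * t\<^sup>2 * (a k)\<^sup>2 / (a 0 powr s * A\<^sup>2 / a k powr s)"
    using assms(2) A_pos
    by (simp add: \<kappa>_def r_def s_def powr_add field_simps power2_eq_square)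
  also have "\<dots> \<le> b * (2 - b) * t\<^sup>2 * (a k)\<^sup>2 / (B k)\<^sup>2"
    using B_sq B_pos b_pos b_less_2 a_0_pos A_pos assms(2) by (intro divide_left_mono) auto
  also have "\<dots> = b * (2 - b) * (t * a k / B k)\<^sup>2"
    by (simp add: power_divide power_mult_distrib)
  also have "\<dots> \<le> b * (2 - b) * (c (Suc k))\<^sup>2"
    using t_a_le[OF assms(1)] B_pos t_pos assms(2) b_pos b_less_2
    by (intro mult_left_mono power_mono) (auto simp: field_simps)
  finally show ?thesis
    using a_Suc[OF assms(1)] by (simp add: algebra_simps)
qed

lemma a_powr_neg_ge:
  "k \<le> m \<Longrightarrow> 0 < a k \<Longrightarrow> a 0 powr (- r) + real k * r * \<kappa> \<le> a k powr (- r)"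
proof (induction k)
  case 0
  then show ?case
    by simp
next
  case (Suc k)
  then have "k < m"
    by simp
  with Suc.prems have a_k_pos: "0 < a k"
    using a_Suc_le[of k] by linarith
  have "a k powr (- r) + r * \<kappa> \<le> a (Suc k) powr (- r)"
    using a_Suc_le_decay[OF \<open>k < m\<close> a_k_pos] a_k_pos Suc.prems r_ge_1 \<kappa>_nonneg
    by (intro powr_neg_increment_of_decay) auto
  with Suc.IH \<open>k < m\<close> a_k_pos show ?case
    by (simp add: algebra_simps)
qed

definition K :: real where "K = real m * b * (2 - b) * t\<^sup>2"

lemma K_nonneg: "0 \<le> K"
  using b_pos b_less_2 by (simp add: K_def)

lemma inverse_r_eq: "1 / r = (2 - b) * t / ((2 - b) * t + 2)"
proof -
  have "1 / r = p / (p + 2)"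
    using p_pos by (simp add: r_def field_simps)
  then show ?thesis
    by (simp add: p_def)
qed

lemma a_m_le_decay: "a m \<le> a 0 * (1 + r * K * (a 0 / A\<^sup>2)) powr (- 1 / r)"
proof (cases "a m = 0")
  case True
  then show ?thesis
    using a_0_pos by simp
next
  case False
  then have a_m_pos: "0 < a m"
    using a_nonneg[of m] by simp
  define w where "w = 1 + r * K * (a 0 / A\<^sup>2)"
  have w_pos: "0 < w"
    using r_ge_1 K_nonneg a_0_pos by (simp add: w_def add_pos_nonneg)
  have "a 0 powr (- r) * a 0 = a 0 powr (- (2 / p))"
    using a_0_pos powr_mult_base[of "a 0" "- r"] by (simp add: r_def mult.commute)
  then have a_0_powr: "a 0 powr (- r) * a 0 = 1 / a 0 powr (2 / p)"
    by (simp add: powr_minus_divide)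
  have "a 0 powr (- r) * w = a 0 powr (- r) + r * K * (a 0 powr (- r) * a 0) / A\<^sup>2"
    by (simp add: w_def algebra_simps)
  also have "\<dots> = a 0 powr (- r) + real m * r * \<kappa>"
    by (simp add: a_0_powr K_def \<kappa>_def)
  also have "\<dots> \<le> a m powr (- r)"
    using a_powr_neg_ge[of m] a_m_pos by simp
  finally have "(a m powr (- r)) powr (- 1 / r) \<le> (a 0 powr (- r) * w) powr (- 1 / r)"
    using a_0_pos r_ge_1 w_pos by (intro powr_mono2') auto
  then show ?thesis
    using a_m_pos a_0_pos r_ge_1 w_pos by (simp add: powr_powr powr_mult w_def)
qed

lemma a_m_le:
  assumes "0 \<le> \<alpha>" "\<alpha> \<le> (2 - b) * t / ((2 - b) * t + 2)"
  shows "a m \<le> a 0 powr (1 - \<alpha>) * (A\<^sup>2) powr \<alpha> * (1 + K) powr (- \<alpha>)"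
proof -
  define u where "u = a 0 / A\<^sup>2"
  have u: "0 < u" "u \<le> 1"
    using a_0_pos a_0_le A_pos by (auto simp: u_def)
  have "a m \<le> a 0 * (1 + r * K * u) powr (- 1 / r)"
    using a_m_le_decay by (simp add: u_def)
  also have "\<dots> \<le> a 0 * (u * (1 + K)) powr (- \<alpha>)"
    using a_0_pos u K_nonneg r_ge_1 assms inverse_r_eq
    by (intro mult_left_mono powr_neg_inverse_le_powr_neg) auto
  also have "\<dots> = a 0 powr (1 - \<alpha>) * (A\<^sup>2) powr \<alpha> * (1 + K) powr (- \<alpha>)"
  proof -
    have "(u * (1 + K)) powr (- \<alpha>) = a 0 powr (- \<alpha>) * (A\<^sup>2) powr \<alpha> * (1 + K) powr (- \<alpha>)"
      using a_0_pos A_pos K_nonneg by (simp add: u_def powr_mult powr_divide powr_minus_divide)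
    moreover have "a 0 * a 0 powr (- \<alpha>) = a 0 powr (1 - \<alpha>)"
      using a_0_pos by (simp add: powr_mult_base)
    ultimately show ?thesis
      by (simp add: mult.assoc)
  qed
  finally show ?thesis .
qed

end

lemma diff_wga_approx: "f - wga_approx b f \<phi> m = wga_res b f \<phi> m"
proof (induction m)
  case 0
  then show ?case
    by (simp add: wga_approx_def)
next
  case (Suc m)
  have "wga_approx b f \<phi> (Suc m)
          = wga_approx b f \<phi> m + (b * inner (wga_res b f \<phi> m) (\<phi> (Suc m))) *\<^sub>R \<phi> (Suc m)"
    by (simp add: wga_approx_def scaleR_right_distrib)
  with Suc.IH show ?case
    by (simp add: algebra_simps)
qed

lemma norm_wga_res_Suc:
  assumes "norm (\<phi> (Suc k)) = 1"
  shows "(norm (wga_res b f \<phi> (Suc k)))\<^sup>2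
           = (norm (wga_res b f \<phi> k))\<^sup>2 - b * (2 - b) * (inner (wga_res b f \<phi> k) (\<phi> (Suc k)))\<^sup>2"
proof -
  define x where "x = wga_res b f \<phi> k"
  define c where "c = inner x (\<phi> (Suc k))"
  have "(norm (x - (b * c) *\<^sub>R \<phi> (Suc k)))\<^sup>2
          = inner x x - 2 * (b * c) * c + (b * c)\<^sup>2 * inner (\<phi> (Suc k)) (\<phi> (Suc k))"
    unfolding power2_norm_eq_inner c_def
    by (simp add: inner_diff_left inner_diff_right inner_commute power2_eq_square)
  also have "\<dots> = (norm x)\<^sup>2 - b * (2 - b) * c\<^sup>2"
    using assms by (simp add: power2_norm_eq_inner[symmetric] power2_eq_square algebra_simps)
  finally show ?thesis
    by (simp add: x_def c_def)
qed

lemma A1_finite_nonempty: "A1_finite D f \<Longrightarrow> D \<noteq> {}"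
  by (auto simp: A1_finite_def A1_def)

lemma inner_le_on_A1:
  fixes D :: "'a::real_inner set"
  assumes "\<And>g. g \<in> D \<Longrightarrow> inner h g \<le> S" "x \<in> A1 D"
  shows "inner h x \<le> S"
proof -
  have "A1 D \<subseteq> {x. inner h x \<le> S}"
    unfolding A1_def using assms(1)
    by (intro closure_minimal hull_minimal convex_halfspace_le closed_halfspace_le) auto
  with assms(2) show ?thesis
    by auto
qed

lemma A1_norm_nonneg: "A1_finite D f \<Longrightarrow> 0 \<le> A1_norm D f"
  unfolding A1_norm_def A1_finite_def by (intro cInf_greatest) auto

context
  fixes D :: "'a::{real_inner,complete_space} set"
  assumes dict: "dictionary D"
begin

lemma inner_dictionary_le_norm: "g \<in> D \<Longrightarrow> inner h g \<le> norm h"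
  using dict norm_cauchy_schwarz[of h g] by (simp add: dictionary_def)

lemma bdd_above_dictionary_inner: "bdd_above ((\<lambda>g. inner h g) ` D)"
  using inner_dictionary_le_norm by (intro bdd_aboveI2) auto

lemma inner_le_SUP_dictionary: "g \<in> D \<Longrightarrow> inner h g \<le> (SUP g\<in>D. inner h g)"
  using bdd_above_dictionary_inner by (rule cSUP_upper2) auto

lemma SUP_dictionary_le_norm: "D \<noteq> {} \<Longrightarrow> (SUP g\<in>D. inner h g) \<le> norm h"
  using inner_dictionary_le_norm by (intro cSUP_least) auto

lemma SUP_dictionary_nonneg:
  assumes "D \<noteq> {}"
  shows "0 \<le> (SUP g\<in>D. inner h g)"
proof -
  from assms obtain g where "g \<in> D" "- g \<in> D"
    using dict by (auto simp: dictionary_def)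
  then show ?thesis
    using inner_le_SUP_dictionary[of g h] inner_le_SUP_dictionary[of "- g" h] by simp
qed

lemma inner_le_A1_norm_mult_SUP:
  assumes "A1_finite D f"
  shows "inner h f \<le> A1_norm D f * (SUP g\<in>D. inner h g)"
proof -
  define S where "S = (SUP g\<in>D. inner h g)"
  define Ms where "Ms = {M. M > 0 \<and> scaleR (1 / M) f \<in> A1 D}"
  have S_nonneg: "0 \<le> S"
    using SUP_dictionary_nonneg A1_finite_nonempty[OF assms] by (simp add: S_def)
  have Ms_ne: "Ms \<noteq> {}"
    using assms by (auto simp: Ms_def A1_finite_def)
  have M_bound: "inner h f \<le> M * S" if "M \<in> Ms" for M
  proof -
    have "0 < M" "scaleR (1 / M) f \<in> A1 D"
      using that by (auto simp: Ms_def)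
    have "inner h (scaleR (1 / M) f) \<le> S"
      by (rule inner_le_on_A1[OF _ \<open>scaleR (1 / M) f \<in> A1 D\<close>])
        (simp add: S_def inner_le_SUP_dictionary)
    with \<open>0 < M\<close> show ?thesis
      by (simp add: field_simps)
  qed
  show ?thesis
  proof (cases "S = 0")
    case True
    from Ms_ne obtain M where "M \<in> Ms"
      by blast
    with M_bound True show ?thesis
      by (simp add: S_def[symmetric])
  next
    case False
    with S_nonneg have S_pos: "0 < S"
      by simp
    have "inner h f / S \<le> Inf Ms"
      using M_bound S_pos by (intro cInf_greatest[OF Ms_ne]) (simp add: pos_divide_le_eq)
    with S_pos show ?thesis
      by (simp add: A1_norm_def Ms_def S_def[symmetric] pos_divide_le_eq)
  qed
qed

lemma norm_le_A1_norm:
  assumes "A1_finite D f"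
  shows "norm f \<le> A1_norm D f"
proof (cases "f = 0")
  case True
  then show ?thesis
    using A1_norm_nonneg[OF assms] by simp
next
  case False
  have "norm f * norm f = inner f f"
    by (simp add: norm_eq_sqrt_inner)
  also have "\<dots> \<le> A1_norm D f * (SUP g\<in>D. inner f g)"
    using assms by (rule inner_le_A1_norm_mult_SUP)
  also have "\<dots> \<le> A1_norm D f * norm f"
    using SUP_dictionary_le_norm[OF A1_finite_nonempty[OF assms]] A1_norm_nonneg[OF assms]
    by (rule mult_left_mono)
  finally show ?thesis
    using False by (simp add: mult_le_cancel_right)
qed

end

lemma norm_wga_res_sq_le:
  assumes "dictionary D" "A1_finite D f" "0 \<le> b"
    and "\<And>i. i \<in> {1..k} \<Longrightarrow> \<phi> i \<in> D \<and> 0 \<le> inner (wga_res b f \<phi> (i - 1)) (\<phi> i)"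
  shows "(norm (wga_res b f \<phi> k))\<^sup>2 \<le> (SUP g\<in>D. inner (wga_res b f \<phi> k) g)
           * (A1_norm D f + b * (\<Sum>i=1..k. inner (wga_res b f \<phi> (i - 1)) (\<phi> i)))"
proof -
  define x where "x = wga_res b f \<phi> k"
  define S where "S = (SUP g\<in>D. inner x g)"
  define c where "c i = inner (wga_res b f \<phi> (i - 1)) (\<phi> i)" for i
  have x_eq: "x = f - b *\<^sub>R (\<Sum>i=1..k. c i *\<^sub>R \<phi> i)"
    using diff_wga_approx[of f b \<phi> k] by (simp add: x_def c_def wga_approx_def)
  have "- S \<le> inner x (\<phi> i)" if "i \<in> {1..k}" for i
    using inner_le_SUP_dictionary[OF assms(1), of "- \<phi> i" x] assms(1,4) that
    by (simp add: S_def dictionary_def)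
  then have "(\<Sum>i=1..k. c i * (- S)) \<le> (\<Sum>i=1..k. c i * inner x (\<phi> i))"
    using assms(4) by (intro sum_mono mult_left_mono) (auto simp: c_def)
  then have sum_bound: "b * - (\<Sum>i=1..k. c i * inner x (\<phi> i)) \<le> b * (S * (\<Sum>i=1..k. c i))"
    using assms(3) by (intro mult_left_mono) (auto simp: sum_distrib_left sum_negf mult.commute)
  have "(norm x)\<^sup>2 = inner x x"
    by (simp add: power2_norm_eq_inner)
  also have "\<dots> = inner x f - b * (\<Sum>i=1..k. c i * inner x (\<phi> i))"
    by (subst (2) x_eq) (simp add: inner_diff_right inner_sum_right)
  also have "\<dots> \<le> A1_norm D f * S + b * (S * (\<Sum>i=1..k. c i))"
    using inner_le_A1_norm_mult_SUP[OF assms(1,2), of x] sum_bound by (simp add: S_def[symmetric])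
  also have "\<dots> = S * (A1_norm D f + b * (\<Sum>i=1..k. c i))"
    by (simp add: algebra_simps)
  finally show ?thesis
    by (simp add: x_def S_def c_def)
qed

lemma wga_coeff_nonneg:
  assumes "dictionary D" "D \<noteq> {}" "0 \<le> t" "wga_realization t b D f \<phi> m" "j \<in> {1..m}"
  shows "0 \<le> inner (wga_res b f \<phi> (j - 1)) (\<phi> j)"
proof -
  have "t * (SUP g\<in>D. inner (wga_res b f \<phi> (j - 1)) g) \<le> inner (wga_res b f \<phi> (j - 1)) (\<phi> j)"
    using assms(4,5) by (simp add: wga_realization_def)
  moreover have "0 \<le> t * (SUP g\<in>D. inner (wga_res b f \<phi> (j - 1)) g)"
    using assms(3) SUP_dictionary_nonneg[OF assms(1,2)] by simp
  ultimately show ?thesis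
    by linarith
qed

lemma wga_greedy_step_le:
  assumes "dictionary D" "A1_finite D f" "0 \<le> t" "0 \<le> b" "wga_realization t b D f \<phi> m" "k < m"
  shows "t * (norm (wga_res b f \<phi> k))\<^sup>2
           \<le> inner (wga_res b f \<phi> k) (\<phi> (Suc k))
              * (A1_norm D f + b * (\<Sum>i=1..k. inner (wga_res b f \<phi> (i - 1)) (\<phi> i)))"
proof -
  define B where "B = A1_norm D f + b * (\<Sum>i=1..k. inner (wga_res b f \<phi> (i - 1)) (\<phi> i))"
  have coeff_nonneg: "0 \<le> inner (wga_res b f \<phi> (i - 1)) (\<phi> i)" if "i \<in> {1..m}" for i
    using wga_coeff_nonneg[OF assms(1) A1_finite_nonempty[OF assms(2)] assms(3,5) that] .
  have "0 \<le> B"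
    using assms(6) coeff_nonneg A1_norm_nonneg[OF assms(2)] assms(4)
    by (auto simp: B_def intro!: add_nonneg_nonneg mult_nonneg_nonneg sum_nonneg)
  have "(norm (wga_res b f \<phi> k))\<^sup>2 \<le> (SUP g\<in>D. inner (wga_res b f \<phi> k) g) * B"
    using assms coeff_nonneg unfolding B_def
    by (intro norm_wga_res_sq_le) (auto simp: wga_realization_def)
  from mult_left_mono[OF this assms(3)]
  have "t * (norm (wga_res b f \<phi> k))\<^sup>2 \<le> (t * (SUP g\<in>D. inner (wga_res b f \<phi> k) g)) * B"
    by (simp add: mult.assoc)
  also have "\<dots> \<le> inner (wga_res b f \<phi> k) (\<phi> (Suc k)) * B"
    using bspec[OF assms(5)[unfolded wga_realization_def], of "Suc k"] assms(6) \<open>0 \<le> B\<close>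
    by (intro mult_right_mono) auto
  finally show ?thesis
    by (simp add: B_def)
qed

lemma wga_greedy_energy:
  fixes D :: "'a::{real_inner,complete_space} set"
  assumes "0 < t" "0 < b" "b < 2" "dictionary D" "f \<noteq> 0" "A1_finite D f"
    and "wga_realization t b D f \<phi> m"
  shows "greedy_energy (\<lambda>k. (norm (wga_res b f \<phi> k))\<^sup>2) (\<lambda>k. inner (wga_res b f \<phi> (k - 1)) (\<phi> k))
           (\<lambda>k. A1_norm D f + b * (\<Sum>i=1..k. inner (wga_res b f \<phi> (i - 1)) (\<phi> i)))
           t b (A1_norm D f) m"
proof unfold_locales
  have norm_f: "norm f \<le> A1_norm D f"
    using norm_le_A1_norm[OF assms(4,6)] .
  with assms(5) show "0 < A1_norm D f"
    by (meson zero_less_norm_iff less_le_trans)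
  from norm_f show "(norm (wga_res b f \<phi> 0))\<^sup>2 \<le> (A1_norm D f)\<^sup>2"
    by (simp add: power_mono)
  fix k
  assume "k < m"
  then have "\<phi> (Suc k) \<in> D"
    using assms(7) by (auto simp: wga_realization_def)
  then show "(norm (wga_res b f \<phi> (Suc k)))\<^sup>2
      = (norm (wga_res b f \<phi> k))\<^sup>2 - b * (2 - b) * (inner (wga_res b f \<phi> (Suc k - 1)) (\<phi> (Suc k)))\<^sup>2"
    using assms(4) by (simp add: dictionary_def norm_wga_res_Suc del: wga_res.simps)
  show "0 \<le> inner (wga_res b f \<phi> (Suc k - 1)) (\<phi> (Suc k))"
    using \<open>k < m\<close> assms wga_coeff_nonneg[OF assms(4) A1_finite_nonempty[OF assms(6)], of t b f \<phi> m "Suc k"]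
    by simp
  show "t * (norm (wga_res b f \<phi> k))\<^sup>2
      \<le> inner (wga_res b f \<phi> (Suc k - 1)) (\<phi> (Suc k))
         * (A1_norm D f + b * (\<Sum>i=1..k. inner (wga_res b f \<phi> (i - 1)) (\<phi> i)))"
    using wga_greedy_step_le[OF assms(4,6) _ _ assms(7) \<open>k < m\<close>] assms(1,2) by simp
qed (use assms in \<open>auto simp: distrib_left\<close>)

theorem theorem2p2:
  fixes D :: "'a::{real_inner,complete_space} set"
    and f :: 'a and \<phi> :: "nat \<Rightarrow> 'a"
    and t b \<alpha> :: real and m :: nat
  assumes "0 < t" "t \<le> 1" "0 < b" "b \<le> 1"
    and "m \<ge> 1"
    and "0 < \<alpha>" "\<alpha> \<le> (2 - b) * t / ((2 - b) * t + 2)"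
    and "dictionary D"
    and "f \<noteq> 0" "A1_finite D f"
    and "wga_realization t b D f \<phi> m"
  shows "norm (f - wga_approx b f \<phi> m)
           \<le> norm f powr (1 - \<alpha>) * A1_norm D f powr \<alpha>
              * (1 + real m * b * (2 - b) * t\<^sup>2) powr (- \<alpha> / 2)"
proof -
  define A where "A = A1_norm D f"
  interpret greedy_energy "\<lambda>k. (norm (wga_res b f \<phi> k))\<^sup>2" "\<lambda>k. inner (wga_res b f \<phi> (k - 1)) (\<phi> k)"
      "\<lambda>k. A + b * (\<Sum>i=1..k. inner (wga_res b f \<phi> (i - 1)) (\<phi> i))" t b A m
    unfolding A_def by (rule wga_greedy_energy) (use assms in auto)
  have "(norm (wga_res b f \<phi> m))\<^sup>2 \<le> ((norm f)\<^sup>2) powr (1 - \<alpha>) * (A\<^sup>2) powr \<alpha> * (1 + K) powr (- \<alpha>)"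
    using a_m_le assms(6,7) by simp
  then have "norm (wga_res b f \<phi> m) \<le> sqrt (((norm f)\<^sup>2) powr (1 - \<alpha>) * (A\<^sup>2) powr \<alpha> * (1 + K) powr (- \<alpha>))"
    by (rule real_le_rsqrt)
  also have "\<dots> = norm f powr (1 - \<alpha>) * A powr \<alpha> * sqrt ((1 + K) powr (- \<alpha>))"
    using A_pos by (simp add: real_sqrt_mult sqrt_power2_powr)
  also have "\<dots> = norm f powr (1 - \<alpha>) * A powr \<alpha> * (1 + K) powr (- \<alpha> / 2)"
    using K_nonneg by (subst powr_half_sqrt_powr) simp_all
  finally show ?thesis
    by (simp add: diff_wga_approx A_def K_def)
qed

end
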